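(* Let $\varphi$ be a 3SAT formula on variables $x_1,\dots,x_n$ in which every clause consists of exactly three literals on three distinct variables, and let $(X,\mathcal{F})$ be the game hypergraph constructed from $\varphi$ as described in the context. Then, in the strict Avoider-Enforcer game on $(X,\mathcal{F})$ in which Enforcer makes the first move, Avoider has a winning strategy if and only if $\varphi$ is satisfiable. (Note that $|X|=4n$ and every losing set has at most six elements.)
   Context: A (strict) Avoider-Enforcer game is given by a finite set $X$ (the board) and a family $\mathcal{F}$ of subsets of $X$ (the losing sets). Two players, Avoider and Enforcer, alternately claim one previously unclaimed element of $X$ per move until all elements of $X$ are claimed. Enforcer wins if Avoider has claimed all elements of some losing set $f\in\mathcal{F}$; otherwise Avoider wins. Construction from a 3SAT formula $\varphi$ on variables $x_1,\dots,x_n$ (each clause having exactly three literals on three distinct variables): the board is $X=\bigcup_{i=1}^n\{a_i,s_i,x_i,\overline{x_i}\}$, consisting of $4n$ distinct vertices; the set $B_i=\{a_i,s_i,x_i,\overline{x_i}\}$ is called box $i$. The vertices $x_i,\overline{x_i}$ are identified with the literals $x_i,\overline{x_i}$ of $\varphi$. The family $\mathcal{F}$ consists of (1) for each $i$, all four 3-element subsets of $B_i$; and (2) for each clause $C=\ell_i\lor\ell_j\lor\ell_k$ of $\varphi$, where $\ell_h\in\{x_h,\overline{x_h}\}$ for $h=i,j,k$, the set $L_C=\{s_i,s_j,s_k,\overline{\ell_i},\overline{\ell_j},\overline{\ell_k}\}$, where $\overline{\ell}$ denotes the negation of literal $\ell$ (with $\overline{\overline{x_h}}=x_h$). *)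

theory Defs
  imports Main
begin

datatype player = Avoider | Enforcer

text \<open>Since the board is finite, the least fixed point captures exactly the existence of a
  winning strategy.\<close>
inductive aw :: "'a set \<Rightarrow> 'a set set \<Rightarrow> 'a set \<Rightarrow> 'a set \<Rightarrow> player \<Rightarrow> bool"
  for X :: "'a set" and F :: "'a set set" where
  game_over: "X \<subseteq> A \<union> E \<Longrightarrow> (\<forall>f\<in>F. \<not> f \<subseteq> A) \<Longrightarrow> aw X F A E p"
| avoider_move: "x \<in> X - (A \<union> E) \<Longrightarrow> aw X F (insert x A) E Enforcer
      \<Longrightarrow> aw X F A E Avoider"
| enforcer_move: "X - (A \<union> E) \<noteq> {}
      \<Longrightarrow> (\<forall>x \<in> X - (A \<union> E). aw X F A (insert x E) Avoider)
      \<Longrightarrow> aw X F A E Enforcer"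

definition avoider_has_winning_strategy :: "'a set \<Rightarrow> 'a set set \<Rightarrow> player \<Rightarrow> bool" where
  "avoider_has_winning_strategy X F first \<longleftrightarrow> aw X F {} {} first"

text \<open>A literal is a pair (i, b): b = True means x_i, b = False means the negation of x_i.\<close>

type_synonym literal = "nat \<times> bool"
type_synonym clause = "literal \<times> literal \<times> literal"

fun clause_lits :: "clause \<Rightarrow> literal set" where
  "clause_lits (l1, l2, l3) = {l1, l2, l3}"

fun wf_clause :: "nat \<Rightarrow> clause \<Rightarrow> bool" where
  "wf_clause n ((i,_), (j,_), (k,_)) \<longleftrightarrow>
     i \<in> {1..n} \<and> j \<in> {1..n} \<and> k \<in> {1..n} \<and> i \<noteq> j \<and> i \<noteq> k \<and> j \<noteq> k"

definition wf_3sat :: "nat \<Rightarrow> clause list \<Rightarrow> bool" where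
  "wf_3sat n \<phi> \<longleftrightarrow> (\<forall>C \<in> set \<phi>. wf_clause n C)"

definition lit_true :: "(nat \<Rightarrow> bool) \<Rightarrow> literal \<Rightarrow> bool" where
  "lit_true \<sigma> l \<longleftrightarrow> \<sigma> (fst l) = snd l"

definition satisfiable :: "clause list \<Rightarrow> bool" where
  "satisfiable \<phi> \<longleftrightarrow> (\<exists>\<sigma>. \<forall>C \<in> set \<phi>. \<exists>l \<in> clause_lits C. lit_true \<sigma> l)"

datatype vertex = VA nat | VS nat | VPos nat | VNeg nat

definition box :: "nat \<Rightarrow> vertex set" where
  "box i = {VA i, VS i, VPos i, VNeg i}"

fun lit_vertex :: "literal \<Rightarrow> vertex" where
  "lit_vertex (i, True) = VPos i"
| "lit_vertex (i, False) = VNeg i"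

fun neg_lit :: "literal \<Rightarrow> literal" where
  "neg_lit (i, b) = (i, \<not> b)"

definition board :: "nat \<Rightarrow> vertex set" where
  "board n = (\<Union>i\<in>{1..n}. box i)"

fun clause_set :: "clause \<Rightarrow> vertex set" where
  "clause_set (l1, l2, l3) =
     {VS (fst l1), VS (fst l2), VS (fst l3),
      lit_vertex (neg_lit l1), lit_vertex (neg_lit l2), lit_vertex (neg_lit l3)}"

definition losing_sets :: "nat \<Rightarrow> clause list \<Rightarrow> vertex set set" where
  "losing_sets n \<phi> =
     {T. \<exists>i\<in>{1..n}. T \<subseteq> box i \<and> card T = 3} \<union> clause_set ` set \<phi>"

end

theory Submission
  imports Defs
begin

text \<open>If \<sigma> satisfies \<phi>, Avoider pairs up the vertices of every box according to \<sigma> and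
  answers each move of Enforcer with its partner: every triple of a box and every clause set
  contains a pair, so Avoider never completes a losing set. Conversely, Avoider ends up with half
  of the board, so to avoid a triple he must take exactly two vertices of every box. Enforcer
  takes a_i in a fresh box and then only literal vertices there; this either leaves Enforcer
  ahead in some box, which is fatal for Avoider by counting, or makes Avoider end with s_i and
  exactly one literal vertex in every box. Those literal vertices form an assignment, and the
  clause it falsifies is a losing set completely claimed by Avoider.\<close>

lemma aw_pairing_strategy:
  assumes "finite X"
    and partner: "\<And>x. x \<in> X \<Longrightarrow> p x \<in> X \<and> p x \<noteq> x \<and> p (p x) = x"
    and losing_has_pair: "\<And>f. f \<in> F \<Longrightarrow> \<exists>x\<in>f. p x \<in> f"
  shows "aw X F {} {} Enforcer"
proof -
  have "aw X F A E Enforcer"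
    if "A \<subseteq> X" "E \<subseteq> X" "A \<inter> E = {}" "p ` A \<subseteq> E" "p ` E \<subseteq> A" for A E
    using that
  proof (induction "card (X - (A \<union> E))" arbitrary: A E rule: less_induct)
    case less
    show ?case
    proof (cases "X \<subseteq> A \<union> E")
      case True
      have "\<not> f \<subseteq> A" if f: "f \<in> F" for f
      proof
        assume "f \<subseteq> A"
        moreover obtain x where "x \<in> f" "p x \<in> f" using losing_has_pair[OF f] by blast
        ultimately have "p x \<in> A \<inter> E" using less.prems(4) by blast
        with less.prems(3) show False by blast
      qed
      with True show ?thesis by (simp add: aw.game_over)
    next
      case False
      show ?thesis
      proof (rule aw.enforcer_move)
        show "X - (A \<union> E) \<noteq> {}" using False by blast
        show "\<forall>x\<in>X - (A \<union> E). aw X F A (insert x E) Avoider"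
        proof
          fix x assume x: "x \<in> X - (A \<union> E)"
          have px: "p x \<in> X - (A \<union> insert x E)"
          proof -
            have "p x \<notin> A"
            proof
              assume "p x \<in> A"
              then have "p (p x) \<in> E" using less.prems(4) by blast
              with x partner[of x] show False by simp
            qed
            moreover have "p x \<notin> E"
            proof
              assume "p x \<in> E"
              then have "p (p x) \<in> A" using less.prems(5) by blast
              with x partner[of x] show False by simp
            qed
            ultimately show ?thesis using x partner[of x] by auto
          qed
          have "X - (insert (p x) A \<union> insert x E) \<subset> X - (A \<union> E)"
            using x by blast
          then have "card (X - (insert (p x) A \<union> insert x E)) < card (X - (A \<union> E))"
            using \<open>finite X\<close> by (simp add: psubset_card_mono)
          then have "aw X F (insert (p x) A) (insert x E) Enforcer"
          proof (rule less.hyps)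
            show "insert (p x) A \<subseteq> X" "insert x E \<subseteq> X"
              using x px less.prems(1,2) by auto
            show "insert (p x) A \<inter> insert x E = {}"
              using x px less.prems(3) by auto
            show "p ` insert (p x) A \<subseteq> insert x E" "p ` insert x E \<subseteq> insert (p x) A"
              using x partner[of x] less.prems(4,5) by auto
          qed
          with px show "aw X F A (insert x E) Avoider" by (rule aw.avoider_move)
        qed
      qed
    qed
  qed
  then show ?thesis by simp
qed

lemma not_aw_if_enforcer_invariant:
  assumes "aw X F A E p" "I p A E"
    and final: "\<And>p A E. I p A E \<Longrightarrow> X \<subseteq> A \<union> E \<Longrightarrow> \<exists>f\<in>F. f \<subseteq> A"
    and after_avoider: "\<And>A E x. I Avoider A E \<Longrightarrow> x \<in> X - (A \<union> E) \<Longrightarrow> I Enforcer (insert x A) E"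
    and enforcer_reply: "\<And>A E. I Enforcer A E \<Longrightarrow> X - (A \<union> E) \<noteq> {} \<Longrightarrow>
      \<exists>x\<in>X - (A \<union> E). I Avoider A (insert x E)"
  shows False
  using assms(1,2)
proof (induction rule: aw.induct)
  case (game_over A E p)
  then show ?case using final by metis
next
  case (avoider_move x A E)
  then show ?case using after_avoider by metis
next
  case (enforcer_move A E)
  then obtain x where "x \<in> X - (A \<union> E)" "I Avoider A (insert x E)"
    using enforcer_reply by metis
  with enforcer_move.IH show ?case by blast
qed

lemma box_disjoint: "x \<in> box i \<Longrightarrow> x \<in> box j \<Longrightarrow> i = j"
  by (auto simp: box_def)

lemma finite_box [simp]: "finite (box i)"
  by (simp add: box_def)

lemma card_box [simp]: "card (box i) = 4"
  by (simp add: box_def)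

lemma finite_board [simp]: "finite (board n)"
  by (simp add: board_def)

lemma mem_board_iff: "x \<in> board n \<longleftrightarrow> (\<exists>i\<in>{1..n}. x \<in> box i)"
  by (simp add: board_def)

lemma box_subset_board: "i \<in> {1..n} \<Longrightarrow> box i \<subseteq> board n"
  by (auto simp: board_def)

lemma insert_Int_box:
  "x \<in> box j \<Longrightarrow> insert x S \<inter> box i = (if i = j then insert x (S \<inter> box i) else S \<inter> box i)"
  using box_disjoint by auto

lemma card_eq_sum_boxes:
  assumes "S \<subseteq> board n"
  shows "card S = (\<Sum>i=1..n. card (S \<inter> box i))"
proof -
  have "S = (\<Union>i\<in>{1..n}. S \<inter> box i)"
    using assms by (auto simp: board_def)
  also have "card \<dots> = (\<Sum>i=1..n. card (S \<inter> box i))"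
    by (rule card_UN_disjoint) (auto dest: box_disjoint)
  finally show ?thesis .
qed

lemma card_Int_box_le_2:
  assumes "\<forall>f\<in>losing_sets n \<phi>. \<not> f \<subseteq> A" "i \<in> {1..n}"
  shows "card (A \<inter> box i) \<le> 2"
proof (rule ccontr)
  assume "\<not> ?thesis"
  then have "3 \<le> card (A \<inter> box i)" by simp
  then obtain T where "T \<subseteq> A \<inter> box i" "card T = 3"
    by (rule obtain_subset_with_card_n)
  with assms show False
    unfolding losing_sets_def by blast
qed

lemma card_Un_Int_box:
  assumes "A \<inter> E = {}"
  shows "card ((A \<union> E) \<inter> box i) = card (A \<inter> box i) + card (E \<inter> box i)"
  unfolding Int_Un_distrib2 by (rule card_Un_disjoint) (use assms in auto)

lemma card_full_box:
  assumes "box i \<subseteq> A \<union> E" "A \<inter> E = {}"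
  shows "card (A \<inter> box i) + card (E \<inter> box i) = 4"
proof -
  have "(A \<union> E) \<inter> box i = box i"
    using assms(1) by blast
  then show ?thesis
    using card_Un_Int_box[OF assms(2), of i] by simp
qed

lemma card_insert_Int_box: "x \<in> box i \<Longrightarrow> x \<notin> S \<Longrightarrow> card (insert x S \<inter> box i) = card (S \<inter> box i) + 1"
  by (simp add: Int_insert_left)

lemma card_insert_Int_box_le: "card (insert x S \<inter> box i) \<le> card (S \<inter> box i) + 1"
  by (simp add: Int_insert_left card_insert_if)

lemma full_board_two_per_box:
  assumes "A \<subseteq> board n" "E \<subseteq> board n" "A \<inter> E = {}" "board n \<subseteq> A \<union> E"
    and at_most_2: "\<And>i. i \<in> {1..n} \<Longrightarrow> card (A \<inter> box i) \<le> 2"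
    and "card E \<le> card A + 1" "i \<in> {1..n}"
  shows "card (A \<inter> box i) = 2" "card (E \<inter> box i) = 2"
proof -
  have box_sum: "card (A \<inter> box j) + card (E \<inter> box j) = 4" if "j \<in> {1..n}" for j
    using card_full_box[OF order_trans[OF box_subset_board[OF that] assms(4)] assms(3)] .
  have "card A + card E = (\<Sum>j=1..n. card (A \<inter> box j) + card (E \<inter> box j))"
    using card_eq_sum_boxes[OF assms(1)] card_eq_sum_boxes[OF assms(2)] by (simp add: sum.distrib)
  also have "\<dots> = 4 * n"
    using box_sum by simp
  finally have "2 * n \<le> card A"
    using assms(6) by linarith
  moreover have "card A = card (A \<inter> box i) + (\<Sum>j\<in>{1..n}-{i}. card (A \<inter> box j))"
    using card_eq_sum_boxes[OF assms(1)] assms(7) by (simp add: sum.remove)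
  moreover have "(\<Sum>j\<in>{1..n}-{i}. card (A \<inter> box j)) \<le> 2 * (n - 1)"
    using sum_bounded_above[of "{1..n}-{i}" "\<lambda>j. card (A \<inter> box j)" 2] at_most_2 assms(7)
    by (simp add: mult.commute)
  ultimately have "2 \<le> card (A \<inter> box i)"
    using assms(7) by auto
  then show "card (A \<inter> box i) = 2"
    using at_most_2 assms(7) by (simp add: le_antisym)
  then show "card (E \<inter> box i) = 2"
    using box_sum[OF assms(7)] by simp
qed

section \<open>A satisfying assignment gives Avoider a pairing strategy\<close>

fun pair_partner :: "(nat \<Rightarrow> bool) \<Rightarrow> vertex \<Rightarrow> vertex" where
  "pair_partner \<sigma> (VA i) = (if \<sigma> i then VPos i else VNeg i)"
| "pair_partner \<sigma> (VS i) = (if \<sigma> i then VNeg i else VPos i)"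
| "pair_partner \<sigma> (VPos i) = (if \<sigma> i then VA i else VS i)"
| "pair_partner \<sigma> (VNeg i) = (if \<sigma> i then VS i else VA i)"

lemma pair_partner_involution [simp]: "pair_partner \<sigma> (pair_partner \<sigma> v) = v"
  by (cases v) auto

lemma pair_partner_neq: "pair_partner \<sigma> v \<noteq> v"
  by (cases v) auto

lemma pair_partner_box: "v \<in> box i \<Longrightarrow> pair_partner \<sigma> v \<in> box i"
  by (cases v) (auto simp: box_def)

lemma three_subset_box_has_pair:
  assumes "T \<subseteq> box i" "card T = 3"
  shows "\<exists>v\<in>T. pair_partner \<sigma> v \<in> T"
proof (rule ccontr)
  assume "\<not> ?thesis"
  then have disjoint: "T \<inter> pair_partner \<sigma> ` T = {}" by auto
  have "finite T" using assms(1) by (rule finite_subset) simp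
  have "inj_on (pair_partner \<sigma>) T"
    by (rule inj_onI) (metis pair_partner_involution)
  then have "card (T \<union> pair_partner \<sigma> ` T) = 6"
    using disjoint \<open>finite T\<close> assms(2) by (simp add: card_Un_disjoint card_image)
  moreover have "T \<union> pair_partner \<sigma> ` T \<subseteq> box i"
    using assms(1) pair_partner_box by blast
  then have "card (T \<union> pair_partner \<sigma> ` T) \<le> card (box i)"
    by (rule card_mono[OF finite_box])
  ultimately show False by simp
qed

lemma clause_set_has_pair:
  assumes "l \<in> clause_lits C" "lit_true \<sigma> l"
  shows "\<exists>v\<in>clause_set C. pair_partner \<sigma> v \<in> clause_set C"
proof -
  obtain l1 l2 l3 where C: "C = (l1, l2, l3)" by (cases C)
  obtain i b where l: "l = (i, b)" by fastforce
  have "VS i \<in> clause_set C" "lit_vertex (neg_lit l) \<in> clause_set C"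
    using assms(1) unfolding C l by auto
  moreover have "pair_partner \<sigma> (VS i) = lit_vertex (neg_lit l)"
    using assms(2) unfolding l lit_true_def by (cases b) auto
  ultimately show ?thesis by metis
qed

lemma satisfiable_avoider_wins:
  assumes "satisfiable \<phi>"
  shows "aw (board n) (losing_sets n \<phi>) {} {} Enforcer"
proof -
  obtain \<sigma> where \<sigma>: "\<forall>C\<in>set \<phi>. \<exists>l\<in>clause_lits C. lit_true \<sigma> l"
    using assms unfolding satisfiable_def by blast
  show ?thesis
  proof (rule aw_pairing_strategy)
    fix x assume "x \<in> board n"
    then obtain i where "i \<in> {1..n}" "x \<in> box i"
      unfolding mem_board_iff by blast
    then have "pair_partner \<sigma> x \<in> board n"
      using pair_partner_box box_subset_board by blast
    then show "pair_partner \<sigma> x \<in> board n \<and> pair_partner \<sigma> x \<noteq> x \<and>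
        pair_partner \<sigma> (pair_partner \<sigma> x) = x"
      by (simp add: pair_partner_neq)
  next
    fix f assume "f \<in> losing_sets n \<phi>"
    then consider i where "f \<subseteq> box i" "card f = 3" | C where "C \<in> set \<phi>" "f = clause_set C"
      unfolding losing_sets_def by blast
    then show "\<exists>x\<in>f. pair_partner \<sigma> x \<in> f"
    proof cases
      case 1
      then show ?thesis by (rule three_subset_box_has_pair)
    next
      case (2 C)
      then obtain l where "l \<in> clause_lits C" "lit_true \<sigma> l"
        using \<sigma> by blast
      then show ?thesis
        unfolding \<open>f = clause_set C\<close> by (rule clause_set_has_pair)
    qed
  qed simp
qed

section \<open>Without a satisfying assignment Enforcer wins\<close>

definition on_track :: "vertex set \<Rightarrow> vertex set \<Rightarrow> nat \<Rightarrow> bool" where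
  "on_track A E i \<longleftrightarrow> VA i \<notin> A \<and> VS i \<notin> E \<and> \<not> (VPos i \<in> A \<and> VNeg i \<in> A)"

definition balanced_box :: "vertex set \<Rightarrow> vertex set \<Rightarrow> nat \<Rightarrow> bool" where
  "balanced_box A E i \<longleftrightarrow> card (A \<inter> box i) = card (E \<inter> box i) \<and> on_track A E i"

definition opened_box :: "vertex set \<Rightarrow> vertex set \<Rightarrow> nat \<Rightarrow> bool" where
  "opened_box A E i \<longleftrightarrow> card (A \<inter> box i) + 1 = card (E \<inter> box i) \<and> VA i \<in> E \<and> on_track A E i"

definition enforcer_leads :: "nat \<Rightarrow> nat \<Rightarrow> vertex set \<Rightarrow> vertex set \<Rightarrow> bool" where
  "enforcer_leads k n A E \<longleftrightarrow>
     (\<exists>i\<in>{1..n}. card (A \<inter> box i) + k \<le> card (E \<inter> box i) \<or> 3 \<le> card (E \<inter> box i))"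

text \<open>Enforcer opens a fresh box i by claiming a_i and waits in it, claiming literal vertices
  only, until Avoider has answered there; s_i stays for Avoider. When Avoider answers elsewhere,
  Enforcer keeps claiming in a box where he is ahead, so at the end he owns three vertices of
  it.\<close>

definition enforcer_inv :: "nat \<Rightarrow> player \<Rightarrow> vertex set \<Rightarrow> vertex set \<Rightarrow> bool" where
  "enforcer_inv n p A E \<longleftrightarrow> A \<subseteq> board n \<and> E \<subseteq> board n \<and> A \<inter> E = {} \<and>
     (case p of
        Enforcer \<Rightarrow> card E = card A \<and>
          (enforcer_leads 1 n A E \<or> (\<forall>i\<in>{1..n}. balanced_box A E i))
      | Avoider \<Rightarrow> card E = card A + 1 \<and>
          (enforcer_leads 2 n A E \<or>
           (\<exists>j\<in>{1..n}. opened_box A E j \<and> (\<forall>i\<in>{1..n} - {j}. balanced_box A E i))))"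

lemma balanced_box_cong:
  assumes "A' \<inter> box i = A \<inter> box i" "E' \<inter> box i = E \<inter> box i"
  shows "balanced_box A' E' i \<longleftrightarrow> balanced_box A E i"
proof -
  have "VA i \<in> box i" "VS i \<in> box i" "VPos i \<in> box i" "VNeg i \<in> box i"
    by (simp_all add: box_def)
  then have "on_track A' E' i \<longleftrightarrow> on_track A E i"
    unfolding on_track_def using assms by blast
  with assms show ?thesis
    by (simp add: balanced_box_def)
qed

lemma balanced_box_insert_other:
  assumes "x \<in> box k" "k \<noteq> i"
  shows "balanced_box (insert x A) E i \<longleftrightarrow> balanced_box A E i"
    and "balanced_box A (insert x E) i \<longleftrightarrow> balanced_box A E i"
proof -
  have A_eq: "insert x A \<inter> box i = A \<inter> box i" and E_eq: "insert x E \<inter> box i = E \<inter> box i"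
    using insert_Int_box[OF assms(1)] assms(2) by simp_all
  show "balanced_box (insert x A) E i \<longleftrightarrow> balanced_box A E i"
    using balanced_box_cong[OF A_eq refl] .
  show "balanced_box A (insert x E) i \<longleftrightarrow> balanced_box A E i"
    using balanced_box_cong[OF refl E_eq] .
qed

lemma on_track_two_claimed:
  assumes "on_track A E i" "card (A \<inter> box i) = 2"
  shows "VS i \<in> A" "VPos i \<in> A \<longleftrightarrow> VNeg i \<notin> A"
proof -
  have sub: "A \<inter> box i \<subseteq> {VS i, VPos i, VNeg i}"
    using assms(1) by (auto simp: on_track_def box_def)
  show "VS i \<in> A"
  proof (rule ccontr)
    assume "VS i \<notin> A"
    with sub have "A \<inter> box i \<subseteq> {VPos i, VNeg i}" by blast
    then have "A \<inter> box i = {VPos i, VNeg i}"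
      using card_subset_eq[of "{VPos i, VNeg i}" "A \<inter> box i"] assms(2) by simp
    with assms(1) show False by (auto simp: on_track_def)
  qed
  have "VPos i \<in> A \<or> VNeg i \<in> A"
  proof (rule ccontr)
    assume "\<not> ?thesis"
    with sub have "A \<inter> box i \<subseteq> {VS i}" by blast
    then have "card (A \<inter> box i) \<le> 1"
      using card_mono[of "{VS i}"] by fastforce
    with assms(2) show False by simp
  qed
  with assms(1) show "VPos i \<in> A \<longleftrightarrow> VNeg i \<notin> A"
    by (auto simp: on_track_def)
qed

text \<open>The falsifying assignment is read off Avoider's positive literal vertices.\<close>

lemma unsatisfiable_clause_claimed:
  assumes "wf_3sat n \<phi>" "\<not> satisfiable \<phi>"
    and claimed: "\<forall>i\<in>{1..n}. VS i \<in> A \<and> (VPos i \<in> A \<longleftrightarrow> VNeg i \<notin> A)"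
  shows "\<exists>C\<in>set \<phi>. clause_set C \<subseteq> A"
proof -
  let ?\<sigma> = "\<lambda>i. VPos i \<in> A"
  have false_lit: "VS i \<in> A \<and> lit_vertex (neg_lit (i, b)) \<in> A"
    if "i \<in> {1..n}" "\<not> lit_true ?\<sigma> (i, b)" for i b
    using claimed that by (cases b) (auto simp: lit_true_def)
  obtain C where C: "C \<in> set \<phi>" "\<forall>l\<in>clause_lits C. \<not> lit_true ?\<sigma> l"
    using assms(2) unfolding satisfiable_def by blast
  obtain i1 b1 i2 b2 i3 b3 where C_eq: "C = ((i1, b1), (i2, b2), (i3, b3))"
    by (metis prod.exhaust)
  have "i1 \<in> {1..n}" "i2 \<in> {1..n}" "i3 \<in> {1..n}"
    using assms(1) C(1) unfolding wf_3sat_def C_eq by auto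
  with C(2) have "clause_set C \<subseteq> A"
    unfolding C_eq using false_lit[of i1 b1] false_lit[of i2 b2] false_lit[of i3 b3] by simp
  with C(1) show ?thesis by blast
qed

lemma enforcer_leads_avoider_move:
  assumes "enforcer_leads 2 n A E"
  shows "enforcer_leads 1 n (insert x A) E"
proof -
  obtain i where "i \<in> {1..n}"
    and "card (A \<inter> box i) + 2 \<le> card (E \<inter> box i) \<or> 3 \<le> card (E \<inter> box i)"
    using assms unfolding enforcer_leads_def by blast
  moreover have "card (insert x A \<inter> box i) \<le> card (A \<inter> box i) + 1"
    by (rule card_insert_Int_box_le)
  ultimately show ?thesis
    unfolding enforcer_leads_def by (intro bexI[of _ i]) linarith+
qed

lemma enforcer_leads_enforcer_move:
  assumes "enforcer_leads 1 n A E" "A \<inter> E = {}" "board n - (A \<union> E) \<noteq> {}"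
  shows "\<exists>x\<in>board n - (A \<union> E). enforcer_leads 2 n A (insert x E)"
proof -
  obtain i where i: "i \<in> {1..n}" and lead: "card (A \<inter> box i) < card (E \<inter> box i) \<or> 3 \<le> card (E \<inter> box i)"
    using assms(1) unfolding enforcer_leads_def by auto
  show ?thesis
  proof (cases "box i \<subseteq> A \<union> E")
    case True
    then have "3 \<le> card (E \<inter> box i)"
      using card_full_box[OF True assms(2)] lead by linarith
    moreover obtain x where x: "x \<in> board n - (A \<union> E)"
      using assms(3) by blast
    moreover have "card (E \<inter> box i) \<le> card (insert x E \<inter> box i)"
      by (rule card_mono) auto
    ultimately show ?thesis
      using i unfolding enforcer_leads_def by force
  next
    case False
    then obtain x where x: "x \<in> box i" "x \<notin> A \<union> E" by blast
    then have "card (insert x E \<inter> box i) = card (E \<inter> box i) + 1"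
      by (simp add: card_insert_Int_box)
    then have "enforcer_leads 2 n A (insert x E)"
      using i lead unfolding enforcer_leads_def by force
    moreover have "x \<in> board n - (A \<union> E)"
      using x box_subset_board[OF i] by blast
    ultimately show ?thesis by blast
  qed
qed

text \<open>If Avoider completed both literal vertices, Enforcer would own nothing in the box but a_j,
  against the balance of the box.\<close>

lemma opened_box_avoider_move:
  assumes "opened_box A E j" "A \<inter> E = {}" "x \<in> box j" "x \<notin> A" "x \<notin> E"
  shows "balanced_box (insert x A) E j"
proof -
  have card_A: "card (insert x A \<inter> box j) = card (A \<inter> box j) + 1"
    using assms(3,4) by (rule card_insert_Int_box)
  have both_lits: False if lits: "VPos j \<in> insert x A" "VNeg j \<in> insert x A"
  proof -
    have "E \<inter> box j \<subseteq> {VA j}"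
      using assms lits by (auto simp: opened_box_def on_track_def box_def)
    then have "card (E \<inter> box j) \<le> 1"
      using card_mono[of "{VA j}"] by fastforce
    then have "card (A \<inter> box j) = 0"
      using assms(1) unfolding opened_box_def by linarith
    then have "A \<inter> box j = {}"
      by simp
    then have "insert x A \<inter> box j = {x}"
      using assms(3) by (simp add: Int_insert_left)
    moreover have "VPos j \<in> insert x A \<inter> box j" "VNeg j \<in> insert x A \<inter> box j"
      using lits by (auto simp: box_def)
    ultimately have "VPos j = VNeg j" by (metis singletonD)
    then show False by simp
  qed
  then show ?thesis
    using assms card_A by (auto simp: balanced_box_def opened_box_def on_track_def)
qed

lemma balanced_box_enforcer_move:
  assumes "balanced_box A E j" "A \<inter> E = {}" "\<not> box j \<subseteq> A \<union> E"
  shows "\<exists>x\<in>box j - (A \<union> E). opened_box A (insert x E) j"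
proof (cases "VA j \<in> E")
  case False
  have "VA j \<in> box j - (A \<union> E)"
    using False assms(1) by (simp add: balanced_box_def on_track_def box_def)
  moreover from this have "opened_box A (insert (VA j) E) j"
    using assms(1) by (simp add: card_insert_Int_box balanced_box_def opened_box_def on_track_def)
  ultimately show ?thesis by blast
next
  case True
  have "(A \<union> E) \<inter> box j \<subset> box j"
    using assms(3) by blast
  then have "card ((A \<union> E) \<inter> box j) < card (box j)"
    by (rule psubset_card_mono[OF finite_box])
  then have "card (E \<inter> box j) \<le> 1"
    using card_Un_Int_box[OF assms(2)] assms(1) unfolding balanced_box_def by simp
  moreover have VA: "VA j \<in> E \<inter> box j"
    using True by (simp add: box_def)
  ultimately have "card (E \<inter> box j) = 1"
    using card_0_eq[of "E \<inter> box j"] by fastforce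
  then obtain y where "E \<inter> box j = {y}"
    by (auto simp: card_1_singleton_iff)
  with VA have E_box: "E \<inter> box j = {VA j}" by simp
  obtain v where v: "v = VPos j \<or> v = VNeg j" "v \<notin> A"
    using assms(1) by (auto simp: balanced_box_def on_track_def)
  then have "v \<in> box j - (A \<union> E)"
    using E_box by (auto simp: box_def)
  moreover from this have "opened_box A (insert v E) j"
    using assms(1) True v
    by (auto simp: card_insert_Int_box balanced_box_def opened_box_def on_track_def)
  ultimately show ?thesis by blast
qed

lemma enforcer_inv_game_over:
  assumes "wf_3sat n \<phi>" "\<not> satisfiable \<phi>" "enforcer_inv n p A E" "board n \<subseteq> A \<union> E"
  shows "\<exists>f\<in>losing_sets n \<phi>. f \<subseteq> A"
proof (rule ccontr)
  assume "\<not> ?thesis"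
  then have no_loss: "\<forall>f\<in>losing_sets n \<phi>. \<not> f \<subseteq> A" by blast
  have A: "A \<subseteq> board n" and E: "E \<subseteq> board n" and disjoint: "A \<inter> E = {}"
    using assms(3) by (simp_all add: enforcer_inv_def)
  have "card E \<le> card A + 1"
    using assms(3) by (cases p) (simp_all add: enforcer_inv_def)
  note two = full_board_two_per_box[OF A E disjoint assms(4) card_Int_box_le_2[OF no_loss] this]
  have "card A = card E"
    using card_eq_sum_boxes[OF A] card_eq_sum_boxes[OF E] two by simp
  then have "p = Enforcer" and "\<not> enforcer_leads 1 n A E"
    using assms(3) two by (cases p; auto simp: enforcer_inv_def enforcer_leads_def)+
  then have on_track: "on_track A E i" if "i \<in> {1..n}" for i
    using assms(3) that by (simp add: enforcer_inv_def balanced_box_def)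
  have "\<forall>i\<in>{1..n}. VS i \<in> A \<and> (VPos i \<in> A \<longleftrightarrow> VNeg i \<notin> A)"
    using on_track_two_claimed[OF on_track two(1)] by blast
  then obtain C where "C \<in> set \<phi>" "clause_set C \<subseteq> A"
    using unsatisfiable_clause_claimed[OF assms(1,2)] by blast
  with no_loss show False
    unfolding losing_sets_def by blast
qed

lemma enforcer_inv_avoider_move:
  assumes inv: "enforcer_inv n Avoider A E" and x: "x \<in> board n - (A \<union> E)"
  shows "enforcer_inv n Enforcer (insert x A) E"
proof -
  have A: "A \<subseteq> board n" and E: "E \<subseteq> board n" and disjoint: "A \<inter> E = {}"
    and card_E: "card E = card A + 1"
    using inv by (simp_all add: enforcer_inv_def)
  have "card (insert x A) = card E"
    using x card_E finite_subset[OF A] by simp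
  moreover have "enforcer_leads 1 n (insert x A) E \<or> (\<forall>i\<in>{1..n}. balanced_box (insert x A) E i)"
  proof (cases "enforcer_leads 2 n A E")
    case True
    then show ?thesis using enforcer_leads_avoider_move by blast
  next
    case False
    then obtain j where j: "j \<in> {1..n}" "opened_box A E j"
      and others: "\<And>i. i \<in> {1..n} - {j} \<Longrightarrow> balanced_box A E i"
      using inv by (auto simp: enforcer_inv_def)
    obtain k where k: "k \<in> {1..n}" "x \<in> box k"
      using x by (auto simp: mem_board_iff)
    show ?thesis
    proof (cases "k = j")
      case True
      have "balanced_box (insert x A) E i" if "i \<in> {1..n}" for i
      proof (cases "i = j")
        case True
        then show ?thesis
          using opened_box_avoider_move[OF j(2) disjoint] k \<open>k = j\<close> x by blast
      next
        case False
        then show ?thesis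
          using balanced_box_insert_other(1)[OF k(2)] others that \<open>k = j\<close> by simp
      qed
      then show ?thesis by blast
    next
      case False
      then have "insert x A \<inter> box j = A \<inter> box j"
        using k by (simp add: insert_Int_box)
      then have "enforcer_leads 1 n (insert x A) E"
        using j unfolding enforcer_leads_def opened_box_def by (intro bexI[of _ j]) auto
      then show ?thesis by blast
    qed
  qed
  ultimately show ?thesis
    using A E disjoint x by (simp add: enforcer_inv_def)
qed

lemma enforcer_inv_enforcer_move:
  assumes inv: "enforcer_inv n Enforcer A E" and free: "board n - (A \<union> E) \<noteq> {}"
  shows "\<exists>x\<in>board n - (A \<union> E). enforcer_inv n Avoider A (insert x E)"
proof -
  have A: "A \<subseteq> board n" and E: "E \<subseteq> board n" and disjoint: "A \<inter> E = {}"
    and card_E: "card E = card A"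
    using inv by (simp_all add: enforcer_inv_def)
  have inv_iff: "enforcer_inv n Avoider A (insert x E) \<longleftrightarrow> enforcer_leads 2 n A (insert x E) \<or>
      (\<exists>j\<in>{1..n}. opened_box A (insert x E) j \<and> (\<forall>i\<in>{1..n} - {j}. balanced_box A (insert x E) i))"
    if "x \<in> board n - (A \<union> E)" for x
    using that A E disjoint card_E finite_subset[OF E] by (auto simp: enforcer_inv_def)
  show ?thesis
  proof (cases "enforcer_leads 1 n A E")
    case True
    then show ?thesis
      using enforcer_leads_enforcer_move[OF True disjoint free] inv_iff by blast
  next
    case False
    then have balanced: "\<And>i. i \<in> {1..n} \<Longrightarrow> balanced_box A E i"
      using inv by (simp add: enforcer_inv_def)
    obtain x0 where "x0 \<in> board n" "x0 \<notin> A \<union> E"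
      using free by blast
    then obtain j where j: "j \<in> {1..n}" "\<not> box j \<subseteq> A \<union> E"
      unfolding mem_board_iff by blast
    then obtain x where x: "x \<in> box j - (A \<union> E)" "opened_box A (insert x E) j"
      using balanced_box_enforcer_move balanced disjoint by blast
    have "balanced_box A (insert x E) i" if "i \<in> {1..n} - {j}" for i
      using balanced_box_insert_other(2)[of x j i A E] balanced x(1) that by simp
    moreover have "x \<in> board n - (A \<union> E)"
      using x(1) box_subset_board[OF j(1)] by blast
    ultimately show ?thesis
      using inv_iff j(1) x(2) by blast
  qed
qed

lemma unsatisfiable_enforcer_wins:
  assumes "wf_3sat n \<phi>" "\<not> satisfiable \<phi>"
  shows "\<not> aw (board n) (losing_sets n \<phi>) {} {} Enforcer"
proof
  assume "aw (board n) (losing_sets n \<phi>) {} {} Enforcer"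
  moreover have "enforcer_inv n Enforcer {} {}"
    by (simp add: enforcer_inv_def balanced_box_def on_track_def)
  ultimately show False
    using enforcer_inv_game_over[OF assms] enforcer_inv_avoider_move enforcer_inv_enforcer_move
    by (rule not_aw_if_enforcer_invariant)
qed

theorem mainTheorem2:
  fixes n :: nat and \<phi> :: "clause list"
  assumes "wf_3sat n \<phi>"
  shows "avoider_has_winning_strategy (board n) (losing_sets n \<phi>) Enforcer
           \<longleftrightarrow> satisfiable \<phi>"
  unfolding avoider_has_winning_strategy_def
  using satisfiable_avoider_wins unsatisfiable_enforcer_wins[OF assms] by blast

end
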